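(* Let $C$ be the cycle on $n\ge 3$ vertices and $\Delta$ its distance squared matrix. If $n\equiv 1\pmod 4$, then $i_+(\Delta)=\frac{n-1}{2}+1$ and $i_-(\Delta)=\frac{n-1}{2}$. If $n\equiv 3\pmod 4$, then $i_+(\Delta)=\frac{n-1}{2}$ and $i_-(\Delta)=\frac{n-1}{2}+1$. If $n$ is even, then $i_+(\Delta)=i_-(\Delta)=\frac n2$.
   Context: For a connected graph with vertices $1,\dots,n$, the distance squared matrix is the $n\times n$ matrix with $(i,j)$ entry $d_{ij}^2$, where $d_{ij}$ is the graph distance between $i$ and $j$. For a real symmetric matrix $M$, $i_+(M)$ and $i_-(M)$ denote the numbers of positive and negative eigenvalues of $M$, counted with multiplicity. *)

theory Defs
  imports "Jordan_Normal_Form.Char_Poly"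
begin

text \<open>Cycle graph C_n on the vertex set {0..<n} (vertex k stands for vertex k+1 of the paper):
  i and j are adjacent iff they are cyclically consecutive.\<close>
definition cycle_adj :: "nat \<Rightarrow> nat \<Rightarrow> nat \<Rightarrow> bool" where
  "cycle_adj n i j \<longleftrightarrow> i < n \<and> j < n \<and> (j = (i + 1) mod n \<or> i = (j + 1) mod n)"

definition has_walk :: "(nat \<Rightarrow> nat \<Rightarrow> bool) \<Rightarrow> nat \<Rightarrow> nat \<Rightarrow> nat \<Rightarrow> bool" where
  "has_walk E k i j \<longleftrightarrow> (\<exists>p. p 0 = i \<and> p k = j \<and> (\<forall>t<k. E (p t) (p (Suc t))))"

text \<open>Graph distance: length of a shortest walk (the graph is assumed connected).\<close>
definition graph_dist :: "(nat \<Rightarrow> nat \<Rightarrow> bool) \<Rightarrow> nat \<Rightarrow> nat \<Rightarrow> nat" where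
  "graph_dist E i j = (LEAST k. has_walk E k i j)"

definition cycle_dist_sq_matrix :: "nat \<Rightarrow> real mat" where
  "cycle_dist_sq_matrix n = mat n n (\<lambda>(i, j). (real (graph_dist (cycle_adj n) i j))^2)"

definition i_plus :: "real mat \<Rightarrow> nat" where
  "i_plus A = (\<Sum>r\<in>{r. poly (char_poly A) r = 0 \<and> r > 0}. order r (char_poly A))"

definition i_minus :: "real mat \<Rightarrow> nat" where
  "i_minus A = (\<Sum>r\<in>{r. poly (char_poly A) r = 0 \<and> r < 0}. order r (char_poly A))"

end

theory Submission
  imports Defs
begin

text \<open>
  The distance squared matrix of the cycle \<open>C\<^sub>n\<close> is circulant with first row
  \<open>f k = (min k (n - k))\<^sup>2\<close>, so the Fourier matrix diagonalises it: its eigenvalues are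
  \<open>\<lambda>\<^sub>m = (\<Sum>k<n. f k \<omega>\<^sub>m\<^sup>k)\<close>, where \<open>\<omega>\<^sub>m = cis \<theta>\<^sub>m\<close> and \<open>\<theta>\<^sub>m = 2\<pi>m/n\<close>.
  Taking the cyclic second difference of the first row multiplies \<open>\<lambda>\<^sub>m\<close> by
  \<open>2 cos \<theta>\<^sub>m - 2\<close>, and the second difference of \<open>f\<close> is the constant 2 except for a drop by
  \<open>n\<close> at each of the antipodal offsets \<open>\<lfloor>n/2\<rfloor>\<close> and \<open>\<lceil>n/2\<rceil>\<close> (which coincide for even
  \<open>n\<close>). Hence
  \<open>\<lambda>\<^sub>m = n cos (\<lfloor>n/2\<rfloor> \<theta>\<^sub>m) / (1 - cos \<theta>\<^sub>m)\<close> for \<open>m \<noteq> 0\<close>, while \<open>\<lambda>\<^sub>0 > 0\<close>.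
  For even \<open>n\<close> the cosine is \<open>(-1)\<^sup>m\<close>; for odd \<open>n\<close> it is \<open>(-1)\<^sup>m cos (\<pi>m/n)\<close>, whose
  sign flips at \<open>m = n/2\<close>.
\<close>

section \<open>Distances in the cycle\<close>

lemma has_walk_sym:
  assumes "\<And>a b. E a b \<Longrightarrow> E b a" and "has_walk E k i j"
  shows "has_walk E k j i"
proof -
  obtain p where p: "p 0 = i" "p k = j" "\<forall>t<k. E (p t) (p (Suc t))"
    using assms(2) unfolding has_walk_def by blast
  have "E (p (k - t)) (p (k - Suc t))" if "t < k" for t
  proof -
    have s: "k - t = Suc (k - Suc t)" "k - Suc t < k" using that by auto
    from p(3) s(2) have "E (p (k - Suc t)) (p (Suc (k - Suc t)))" by blast
    then show ?thesis unfolding s(1) by (rule assms(1))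
  qed
  then show ?thesis unfolding has_walk_def using p by (intro exI[of _ "\<lambda>t. p (k - t)"]) auto
qed

lemma cycle_adj_sym: "cycle_adj n a b \<Longrightarrow> cycle_adj n b a"
  unfolding cycle_adj_def by auto

lemma cycle_adj_offset_le:
  assumes "cycle_adj n a b" "i < n" "a < n"
  shows "min ((b + n - i) mod n) (n - (b + n - i) mod n)
           \<le> min ((a + n - i) mod n) (n - (a + n - i) mod n) + 1"
proof -
  have "b < n" using assms unfolding cycle_adj_def by auto
  have da: "(a + n - i) mod n = (if i \<le> a then a - i else a + n - i)"
    and db: "(b + n - i) mod n = (if i \<le> b then b - i else b + n - i)"
    using assms \<open>b < n\<close> by (auto simp: mod_if)
  from assms(1) have "(b = a + 1 \<and> a + 1 < n) \<or> (a = n - 1 \<and> b = 0)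
      \<or> (a = b + 1 \<and> b + 1 < n) \<or> (b = n - 1 \<and> a = 0)"
    unfolding cycle_adj_def by (auto simp: mod_if split: if_splits)
  then show ?thesis unfolding da db using assms \<open>b < n\<close> by auto
qed

lemma has_walk_cycle_length_ge:
  assumes "has_walk (cycle_adj n) k i j" "i < n"
  shows "min ((j + n - i) mod n) (n - (j + n - i) mod n) \<le> k"
proof -
  obtain p where p: "p 0 = i" "p k = j" "\<forall>t<k. cycle_adj n (p t) (p (Suc t))"
    using assms unfolding has_walk_def by auto
  have "p t < n \<and> min ((p t + n - i) mod n) (n - (p t + n - i) mod n) \<le> t" if "t \<le> k" for t
    using that
  proof (induction t)
    case 0
    then show ?case using p assms by auto
  next
    case (Suc t)
    then have adj: "cycle_adj n (p t) (p (Suc t))" and "p t < n"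
      using p by auto
    then have "p (Suc t) < n" unfolding cycle_adj_def by simp
    with cycle_adj_offset_le[OF adj assms(2) \<open>p t < n\<close>] Suc show ?case by simp
  qed
  then show ?thesis using p by auto
qed

lemma has_walk_cycle_forward:
  assumes "i < n" "j < n"
  shows "has_walk (cycle_adj n) ((j + n - i) mod n) i j"
  unfolding has_walk_def
proof (intro exI[of _ "\<lambda>t. (i + t) mod n"] conjI allI impI)
  show "(i + 0) mod n = i" "(i + (j + n - i) mod n) mod n = j"
    using assms by (auto simp: mod_if)
  show "cycle_adj n ((i + t) mod n) ((i + Suc t) mod n)" for t
    using assms unfolding cycle_adj_def by (auto simp: mod_Suc_eq)
qed

lemma graph_dist_cycle:
  assumes "i < n" "j < n"
  shows "graph_dist (cycle_adj n) i j = min ((j + n - i) mod n) (n - (j + n - i) mod n)"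
proof -
  let ?d = "(j + n - i) mod n"
  have "has_walk (cycle_adj n) (min ?d (n - ?d)) i j"
  proof (cases "?d = 0")
    case True
    then show ?thesis using has_walk_cycle_forward[OF assms] by simp
  next
    case False
    then have "(i + n - j) mod n = n - ?d" using assms by (auto simp: mod_if)
    then have "has_walk (cycle_adj n) (n - ?d) i j"
      using has_walk_sym[OF cycle_adj_sym has_walk_cycle_forward[OF assms(2,1)]] by simp
    then show ?thesis using has_walk_cycle_forward[OF assms] by (simp add: min_def)
  qed
  then show ?thesis unfolding graph_dist_def
    by (intro Least_equality) (auto intro: has_walk_cycle_length_ge assms)
qed

section \<open>Roots of unity and circulant matrices\<close>

definition unit_root :: "nat \<Rightarrow> nat \<Rightarrow> complex" where
  "unit_root n m = cis (2 * pi * real m / real n)"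

lemma unit_root_mult: "unit_root n a * unit_root n b = unit_root n (a + b)"
  unfolding unit_root_def cis_mult by (simp add: add_divide_distrib distrib_left)

lemma unit_root_power: "unit_root n m ^ k = unit_root n (m * k)"
  unfolding unit_root_def DeMoivre by (simp add: field_simps)

lemma unit_root_mod: "unit_root n (m mod n) = unit_root n m"
proof (cases "n = 0")
  case False
  have "real m = real (m mod n) + real n * real (m div n)"
    by (simp flip: of_nat_mult of_nat_add)
  then have "2 * pi * real m / real n = 2 * pi * real (m mod n) / real n + 2 * pi * real (m div n)"
    using False by (simp add: field_simps)
  then show ?thesis
    unfolding unit_root_def by (simp add: cis_mult [symmetric])
qed simp

lemma unit_root_0 [simp]: "unit_root n 0 = 1"
  by (simp add: unit_root_def)

lemma unit_root_pow_n: "unit_root n m ^ n = 1"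
  using unit_root_mod[of n "m * n"] by (simp add: unit_root_power)

lemma cos_2pi_div_lt_1:
  assumes "0 < m" "m < n"
  shows "cos (2 * pi * real m / real n) < 1"
proof -
  have "sin (pi * real m / real n) > 0"
    using assms by (intro sin_gt_zero) (auto simp: field_simps)
  moreover have "cos (2 * (pi * real m / real n)) = 1 - 2 * (sin (pi * real m / real n))^2"
    by (rule cos_double_sin)
  ultimately show ?thesis by (simp add: mult.assoc)
qed

lemma sum_unit_root_powers:
  assumes "m < n"
  shows "(\<Sum>k<n. unit_root n m ^ k) = (if m = 0 then of_nat n else 0)"
proof (cases "m = 0")
  case False
  then have "unit_root n m \<noteq> 1"
    using cos_2pi_div_lt_1[of m n] assms by (auto simp: unit_root_def complex_eq_iff)
  then show ?thesis
    using geometric_sum[of "unit_root n m" n] False by (simp add: unit_root_pow_n)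
qed simp

lemma cnj_unit_root:
  assumes "m \<le> n"
  shows "cnj (unit_root n m) = unit_root n (n - m)"
proof -
  have "cnj (unit_root n m) * unit_root n m = 1"
    by (simp add: unit_root_def cis_cnj cis_mult)
  moreover have "unit_root n (n - m) * unit_root n m = 1"
    using unit_root_mod[of n n] assms by (simp add: unit_root_mult)
  ultimately show ?thesis
    by (metis mult_cancel_right cis_neq_zero unit_root_def)
qed

lemma unit_root_orthogonal:
  assumes "m < n" "l < n"
  shows "(\<Sum>k<n. cnj (unit_root n m) ^ k * unit_root n l ^ k) = (if m = l then of_nat n else 0)"
proof -
  have "cnj (unit_root n m) * unit_root n l = unit_root n ((n - m + l) mod n)"
    using assms by (simp add: cnj_unit_root unit_root_mult unit_root_mod)
  moreover have "(n - m + l) mod n = 0 \<longleftrightarrow> m = l"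
    using assms by (auto simp: mod_if)
  ultimately show ?thesis
    using sum_unit_root_powers[of "(n - m + l) mod n" n] assms
    by (simp add: power_mult_distrib [symmetric])
qed

lemma cnj_unit_root_power:
  assumes "k \<le> n"
  shows "cnj (unit_root n m ^ k) = unit_root n m ^ (n - k)"
proof -
  have "cnj (unit_root n m ^ k) * unit_root n m ^ k = 1"
    by (simp add: unit_root_def cis_cnj cis_mult flip: power_mult_distrib)
  moreover have "unit_root n m ^ (n - k) * unit_root n m ^ k = 1"
    using assms unit_root_pow_n[of n m] by (simp flip: power_add)
  ultimately show ?thesis
    by (metis mult_cancel_right mult_zero_left zero_neq_one)
qed

lemma sum_rotate_powers:
  fixes z :: "'a::comm_semiring_1"
  assumes "z ^ n = 1" "i \<le> n"
  shows "(\<Sum>j<n. c ((j + n - i) mod n) * z ^ j) = z ^ i * (\<Sum>k<n. c k * z ^ k)"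
proof -
  have z_mod: "z ^ (a mod n) = z ^ a" for a
    by (metis assms(1) mod_mult_div_eq power_add power_mult power_one mult_1_right mult.commute)
  have "(\<Sum>j<n. c ((j + n - i) mod n) * z ^ j) = (\<Sum>k<n. c k * z ^ ((k + i) mod n))"
  proof (rule sum.reindex_bij_witness[where i = "\<lambda>k. (k + i) mod n" and j = "\<lambda>j. (j + n - i) mod n"])
    fix j assume "j \<in> {..<n}"
    then show "((j + n - i) mod n + i) mod n = j" "(j + n - i) mod n \<in> {..<n}"
      using assms(2) by (auto simp: mod_if)
    then show "c ((j + n - i) mod n) * z ^ (((j + n - i) mod n + i) mod n) = c ((j + n - i) mod n) * z ^ j"
      by simp
  next
    fix k assume "k \<in> {..<n}"
    then show "((k + i) mod n + n - i) mod n = k" "(k + i) mod n \<in> {..<n}"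
      using assms(2) by (auto simp: mod_if)
  qed
  also have "\<dots> = z ^ i * (\<Sum>k<n. c k * z ^ k)"
    by (simp add: z_mod sum_distrib_left power_add algebra_simps)
  finally show ?thesis .
qed

definition circulant :: "nat \<Rightarrow> (nat \<Rightarrow> 'a) \<Rightarrow> 'a mat" where
  "circulant n c = mat n n (\<lambda>(i, j). c ((j + n - i) mod n))"

definition circulant_eigenvalue :: "nat \<Rightarrow> (nat \<Rightarrow> complex) \<Rightarrow> nat \<Rightarrow> complex" where
  "circulant_eigenvalue n c m = (\<Sum>k<n. c k * unit_root n m ^ k)"

definition fourier_mat :: "nat \<Rightarrow> complex mat" where
  "fourier_mat n = mat n n (\<lambda>(k, m). unit_root n m ^ k)"

lemma fourier_mat_inverse:
  assumes "n > 0"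
  shows "mat n n (\<lambda>(m, k). cnj (unit_root n m ^ k) / of_nat n) * fourier_mat n = 1\<^sub>m n"
  using assms
  by (intro eq_matI)
     (auto simp: fourier_mat_def scalar_prod_def atLeast0LessThan unit_root_orthogonal
       simp flip: sum_divide_distrib)

lemma circulant_mult_fourier_mat:
  "circulant n c * fourier_mat n = fourier_mat n * mat_diag n (circulant_eigenvalue n c)"
proof (rule eq_matI)
  fix i m assume "i < dim_row (fourier_mat n * mat_diag n (circulant_eigenvalue n c))"
    "m < dim_col (fourier_mat n * mat_diag n (circulant_eigenvalue n c))"
  then have "i < n" "m < n" by (auto simp: fourier_mat_def mat_diag_def)
  then have "(circulant n c * fourier_mat n) $$ (i, m) = (\<Sum>j<n. c ((j + n - i) mod n) * unit_root n m ^ j)"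
    by (simp add: circulant_def fourier_mat_def scalar_prod_def atLeast0LessThan)
  also have "\<dots> = unit_root n m ^ i * circulant_eigenvalue n c m"
    using \<open>i < n\<close> unfolding circulant_eigenvalue_def by (intro sum_rotate_powers unit_root_pow_n) simp
  also have "\<dots> = (fourier_mat n * mat_diag n (circulant_eigenvalue n c)) $$ (i, m)"
    using \<open>i < n\<close> \<open>m < n\<close> by (simp add: mat_diag_mult_right[of _ n] fourier_mat_def)
  finally show "(circulant n c * fourier_mat n) $$ (i, m) = \<dots>" .
qed (auto simp: circulant_def fourier_mat_def mat_diag_def)

lemma char_poly_circulant:
  assumes "n > 0"
  shows "char_poly (circulant n c) = (\<Prod>m<n. [:- circulant_eigenvalue n c m, 1:])"
proof -
  define F where "F = fourier_mat n"
  define G where "G = mat n n (\<lambda>(m, k). cnj (unit_root n m ^ k) / of_nat n)"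
  define D where "D = mat_diag n (circulant_eigenvalue n c)"
  have carrier: "circulant n c \<in> carrier_mat n n" "F \<in> carrier_mat n n" "G \<in> carrier_mat n n"
    "D \<in> carrier_mat n n"
    by (auto simp: circulant_def F_def G_def D_def fourier_mat_def)
  have GF: "G * F = 1\<^sub>m n"
    unfolding G_def F_def by (rule fourier_mat_inverse[OF assms])
  have FG: "F * G = 1\<^sub>m n"
    by (rule mat_mult_left_right_inverse[OF carrier(3,2) GF])
  have "circulant n c = circulant n c * (F * G)"
    using carrier by (simp add: FG)
  also have "\<dots> = (circulant n c * F) * G"
    using carrier by (simp add: assoc_mult_mat)
  also have "\<dots> = F * D * G"
    unfolding F_def D_def circulant_mult_fourier_mat ..
  finally have eq: "circulant n c = F * D * G" .
  have "similar_mat (circulant n c) D"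
    using carrier by (intro similar_matI[OF _ FG GF eq]) simp
  then have "char_poly (circulant n c) = char_poly D"
    by (rule char_poly_similar)
  also have "\<dots> = (\<Prod>a \<leftarrow> diag_mat D. [:- a, 1:])"
    using carrier by (intro char_poly_upper_triangular) (auto simp: D_def mat_diag_def upper_triangular_def)
  also have "diag_mat D = map (circulant_eigenvalue n c) [0..<n]"
    by (simp add: D_def mat_diag_def diag_mat_def)
  finally show ?thesis
    by (simp add: prod.distinct_set_conv_list[symmetric] atLeast0LessThan)
qed

section \<open>The spectrum of the distance squared matrix\<close>

definition cyclic_second_diff :: "nat \<Rightarrow> (nat \<Rightarrow> 'a::ring_1) \<Rightarrow> nat \<Rightarrow> 'a" where
  "cyclic_second_diff n g k = g ((k + 1) mod n) + g ((k + n - 1) mod n) - 2 * g k"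

lemma of_real_cyclic_second_diff:
  "of_real (cyclic_second_diff n g k) = cyclic_second_diff n (\<lambda>k. of_real (g k)) k"
  by (simp add: cyclic_second_diff_def)

lemma circulant_eigenvalue_cyclic_second_diff:
  assumes "n > 0"
  shows "circulant_eigenvalue n (cyclic_second_diff n c) m
           = of_real (2 * cos (2 * pi * real m / real n) - 2) * circulant_eigenvalue n c m"
proof -
  define z where "z = unit_root n m"
  define S where "S = circulant_eigenvalue n c m"
  have "z ^ n = 1"
    unfolding z_def by (rule unit_root_pow_n)
  have "z ^ (n - 1) = cnj z"
    unfolding z_def using cnj_unit_root_power[of 1 n m] assms by simp
  have "(\<Sum>k<n. c ((k + 1) mod n) * z ^ k) = z ^ (n - 1) * S"
    using sum_rotate_powers[OF \<open>z ^ n = 1\<close>, of "n - 1" c] assms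
    by (simp add: S_def z_def circulant_eigenvalue_def)
  moreover have "(\<Sum>k<n. c ((k + n - 1) mod n) * z ^ k) = z * S"
    using sum_rotate_powers[OF \<open>z ^ n = 1\<close>, of 1 c] assms
    by (simp add: S_def z_def circulant_eigenvalue_def)
  ultimately have "circulant_eigenvalue n (cyclic_second_diff n c) m = (cnj z + z - 2) * S"
    unfolding circulant_eigenvalue_def cyclic_second_diff_def \<open>z ^ (n - 1) = cnj z\<close>
    by (simp add: z_def S_def circulant_eigenvalue_def algebra_simps sum.distrib sum_subtractf
        sum_distrib_left)
  also have "cnj z + z = of_real (2 * cos (2 * pi * real m / real n))"
    by (simp add: z_def unit_root_def complex_eq_iff)
  finally show ?thesis
    by (simp add: S_def)
qed

text \<open>Squared distance between two vertices of \<open>C\<^sub>n\<close> whose cyclic offset is \<open>k < n\<close>.\<close>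

definition cycle_sq_dist :: "nat \<Rightarrow> nat \<Rightarrow> real" where
  "cycle_sq_dist n k = real (min k (n - k)) ^ 2"

lemma cycle_dist_sq_matrix_circulant: "cycle_dist_sq_matrix n = circulant n (cycle_sq_dist n)"
  by (auto simp: cycle_dist_sq_matrix_def circulant_def cycle_sq_dist_def graph_dist_cycle)

lemma mod_pred_eq:
  fixes k n :: nat
  assumes "0 < k" "k \<le> n"
  shows "(k + n - 1) mod n = k - 1"
proof -
  have e: "k + n - 1 = (k - 1) + n"
    using assms by auto
  show ?thesis
    unfolding e mod_add_self2 using assms by simp
qed

lemma cyclic_second_diff_cycle_sq_dist_odd:
  assumes "n = 2 * p + 1" "p \<ge> 1" "k < n"
  shows "cyclic_second_diff n (cycle_sq_dist n) k = (if k = p \<or> k = p + 1 then 2 - real n else 2)"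
proof -
  consider "k = 0" | "k = n - 1" | "0 < k" "k < n - 1"
    using assms by linarith
  then show ?thesis
  proof cases
    case 1
    then show ?thesis using assms by (simp add: cyclic_second_diff_def cycle_sq_dist_def)
  next
    case 2
    then have "(k + 1) mod n = 0" "(k + n - 1) mod n = k - 1"
      using assms mod_pred_eq[of k n] by auto
    then show ?thesis using assms 2
      by (auto simp: cyclic_second_diff_def cycle_sq_dist_def min_def power2_eq_square algebra_simps)
  next
    case 3
    then have "(k + 1) mod n = k + 1" "(k + n - 1) mod n = k - 1"
      using assms mod_pred_eq[of k n] by auto
    then show ?thesis using assms 3
      by (auto simp: cyclic_second_diff_def cycle_sq_dist_def min_def power2_eq_square algebra_simps
          of_nat_diff)
  qed
qed

lemma cyclic_second_diff_cycle_sq_dist_even: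
  assumes "n = 2 * p" "p \<ge> 2" "k < n"
  shows "cyclic_second_diff n (cycle_sq_dist n) k = (if k = p then 2 - 2 * real n else 2)"
proof -
  consider "k = 0" | "k = n - 1" | "0 < k" "k < n - 1"
    using assms by linarith
  then show ?thesis
  proof cases
    case 1
    then show ?thesis using assms by (simp add: cyclic_second_diff_def cycle_sq_dist_def)
  next
    case 2
    then have "(k + 1) mod n = 0" "(k + n - 1) mod n = k - 1"
      using assms mod_pred_eq[of k n] by auto
    then show ?thesis using assms 2
      by (auto simp: cyclic_second_diff_def cycle_sq_dist_def min_def power2_eq_square algebra_simps)
  next
    case 3
    then have e: "(k + 1) mod n = k + 1" "(k + n - 1) mod n = k - 1"
      using assms mod_pred_eq[of k n] by auto
    consider "k < p" | "k = p" | "k = p + 1" | "k > p + 1"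
      by linarith
    then show ?thesis
      by cases (use assms 3 e in \<open>auto simp: cyclic_second_diff_def cycle_sq_dist_def min_def
          power2_eq_square algebra_simps of_nat_diff\<close>)
  qed
qed

lemma cyclic_second_diff_cycle_sq_dist:
  assumes "n \<ge> 3" "k < n"
  shows "cyclic_second_diff n (cycle_sq_dist n) k
           = 2 - (if k = n div 2 then real n else 0) - (if k = n - n div 2 then real n else 0)"
proof (cases "even n")
  case True
  then obtain p where "n = 2 * p" by blast
  with assms show ?thesis
    using cyclic_second_diff_cycle_sq_dist_even[of n p k] by simp
next
  case False
  then obtain p where "n = 2 * p + 1" using oddE by blast
  with assms show ?thesis
    using cyclic_second_diff_cycle_sq_dist_odd[of n p k] by simp
qed

lemma circulant_eigenvalue_second_diff_cycle_sq_dist: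
  assumes "n \<ge> 3" "0 < m" "m < n"
  shows "circulant_eigenvalue n (cyclic_second_diff n (\<lambda>k. of_real (cycle_sq_dist n k))) m
           = - of_real (2 * real n * cos (real (n div 2) * (2 * pi * real m / real n)))"
proof -
  define z where "z = unit_root n m"
  define h where "h = n div 2"
  have "h < n" "n - h < n"
    using assms by (auto simp: h_def)
  have "circulant_eigenvalue n (cyclic_second_diff n (\<lambda>k. of_real (cycle_sq_dist n k))) m
      = (\<Sum>k<n. (2 - (if k = h then of_nat n else 0) - (if k = n - h then of_nat n else 0)) * z ^ k)"
    unfolding circulant_eigenvalue_def z_def h_def
    by (intro sum.cong refl)
       (simp add: cyclic_second_diff_cycle_sq_dist assms flip: of_real_cyclic_second_diff)
  also have "\<dots> = (\<Sum>k<n. 2 * z ^ k - (if k = h then of_nat n * z ^ k else 0)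
                               - (if k = n - h then of_nat n * z ^ k else 0))"
    by (intro sum.cong refl) (simp add: algebra_simps)
  also have "\<dots> = 2 * (\<Sum>k<n. z ^ k) - of_nat n * z ^ h - of_nat n * z ^ (n - h)"
    using \<open>h < n\<close> \<open>n - h < n\<close> by (simp add: sum_subtractf sum_distrib_left sum.delta)
  also have "(\<Sum>k<n. z ^ k) = 0"
    using assms by (simp add: z_def sum_unit_root_powers)
  finally have "circulant_eigenvalue n (cyclic_second_diff n (\<lambda>k. of_real (cycle_sq_dist n k))) m
                  = - of_nat n * (z ^ h + z ^ (n - h))"
    by (simp add: algebra_simps)
  moreover have "z ^ (n - h) = cnj (z ^ h)"
    unfolding z_def by (rule cnj_unit_root_power [symmetric]) (use \<open>h < n\<close> in simp)
  then have "z ^ h + z ^ (n - h) = of_real (2 * Re (z ^ h))"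
    by (simp only: complex_add_cnj)
  moreover have "Re (z ^ h) = cos (real h * (2 * pi * real m / real n))"
    by (simp add: z_def unit_root_def DeMoivre)
  ultimately show ?thesis
    by (simp add: h_def)
qed

text \<open>The case \<open>m = 0\<close> is separate: there the closed form would divide by \<open>1 - cos 0 = 0\<close>.\<close>

definition cycle_sq_eigenvalue :: "nat \<Rightarrow> nat \<Rightarrow> real" where
  "cycle_sq_eigenvalue n m =
     (if m = 0 then (\<Sum>k<n. cycle_sq_dist n k)
      else real n * cos (real (n div 2) * (2 * pi * real m / real n))
             / (1 - cos (2 * pi * real m / real n)))"

lemma circulant_eigenvalue_cycle_sq_dist:
  assumes "n \<ge> 3" "m < n"
  shows "circulant_eigenvalue n (\<lambda>k. of_real (cycle_sq_dist n k)) m = of_real (cycle_sq_eigenvalue n m)"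
proof (cases "m = 0")
  case True
  then show ?thesis
    by (simp add: circulant_eigenvalue_def cycle_sq_eigenvalue_def)
next
  case False
  define t where "t = 2 * pi * real m / real n"
  define c where "c = cos (real (n div 2) * t)"
  have "cos t < 1"
    using cos_2pi_div_lt_1[of m n] False assms by (simp add: t_def)
  then have "2 * cos t - 2 \<noteq> 0" "1 - cos t \<noteq> 0"
    by auto
  have "of_real (2 * cos t - 2) * circulant_eigenvalue n (\<lambda>k. of_real (cycle_sq_dist n k)) m
          = of_real (- 2 * real n * c)"
    using circulant_eigenvalue_cyclic_second_diff[of n "\<lambda>k. of_real (cycle_sq_dist n k)" m]
      circulant_eigenvalue_second_diff_cycle_sq_dist[of n m] False assms
    by (simp add: t_def c_def)
  then have "circulant_eigenvalue n (\<lambda>k. of_real (cycle_sq_dist n k)) m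
               = of_real (- 2 * real n * c) / of_real (2 * cos t - 2)"
    using \<open>2 * cos t - 2 \<noteq> 0\<close> by (metis nonzero_mult_div_cancel_left of_real_eq_0_iff)
  also have "\<dots> = of_real (real n * c / (1 - cos t))"
    using \<open>2 * cos t - 2 \<noteq> 0\<close> \<open>1 - cos t \<noteq> 0\<close>
    by (simp only: of_real_divide [symmetric]) (simp add: field_simps)
  also have "real n * c / (1 - cos t) = cycle_sq_eigenvalue n m"
    using False by (simp add: cycle_sq_eigenvalue_def c_def t_def)
  finally show ?thesis .
qed

interpretation of_real_poly: map_poly_inj_comm_ring_hom "of_real :: real \<Rightarrow> complex" ..

lemma char_poly_real_circulant:
  fixes c \<mu> :: "nat \<Rightarrow> real"
  assumes "n > 0" "\<And>m. m < n \<Longrightarrow> circulant_eigenvalue n (\<lambda>k. of_real (c k)) m = of_real (\<mu> m)"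
  shows "char_poly (circulant n c) = (\<Prod>m<n. [:- \<mu> m, 1:])"
proof -
  have "of_real_hom.mat_hom (circulant n c) = circulant n (\<lambda>k. complex_of_real (c k))"
    by (auto simp: circulant_def)
  then have "map_poly of_real (char_poly (circulant n c))
               = char_poly (circulant n (\<lambda>k. complex_of_real (c k)))"
    by (metis of_real_hom.char_poly_hom circulant_def mat_carrier)
  also have "\<dots> = (\<Prod>m<n. [:- of_real (\<mu> m), 1:])"
    using assms by (simp add: char_poly_circulant)
  also have "\<dots> = map_poly of_real (\<Prod>m<n. [:- \<mu> m, 1:])"
    by (simp add: of_real_poly.hom_prod)
  finally show ?thesis
    by (rule of_real_poly.injectivity)
qed

lemma char_poly_cycle_dist_sq_matrix:
  assumes "n \<ge> 3"
  shows "char_poly (cycle_dist_sq_matrix n) = (\<Prod>m<n. [:- cycle_sq_eigenvalue n m, 1:])"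
  unfolding cycle_dist_sq_matrix_circulant
  using assms by (intro char_poly_real_circulant circulant_eigenvalue_cycle_sq_dist) auto

section \<open>Counting eigenvalues by sign\<close>

lemma order_prod_linear:
  fixes g :: "'b \<Rightarrow> 'a::idom"
  assumes "finite M"
  shows "order r (\<Prod>m\<in>M. [:- g m, 1:]) = card {m\<in>M. g m = r}"
  using assms
proof (induction M rule: finite_induct)
  case (insert x M)
  have "(\<Prod>m\<in>M. [:- g m, 1:]) \<noteq> 0"
    using insert by (auto simp: prod_zero_iff)
  then have "order r ([:- g x, 1:] * (\<Prod>m\<in>M. [:- g m, 1:]))
               = order r [:- g x, 1:] + order r (\<Prod>m\<in>M. [:- g m, 1:])"
    by (intro order_mult) (simp only: mult_eq_0_iff, simp)
  then have "order r (\<Prod>m\<in>insert x M. [:- g m, 1:])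
               = order r [:- g x, 1:] + order r (\<Prod>m\<in>M. [:- g m, 1:])"
    by (simp only: prod.insert[OF insert.hyps])
  also have "order r [:- g x, 1:] = (if g x = r then 1 else 0)"
    using order_linear'[of r "- g x"] by auto
  also have "{m\<in>insert x M. g m = r}
               = (if g x = r then insert x {m\<in>M. g m = r} else {m\<in>M. g m = r})"
    by auto
  ultimately show ?case
    using insert by auto
qed simp

lemma sum_order_roots_prod_linear:
  fixes g :: "'b \<Rightarrow> 'a::idom"
  assumes "finite M"
  shows "(\<Sum>r\<in>{r. poly (\<Prod>m\<in>M. [:- g m, 1:]) r = 0 \<and> P r}. order r (\<Prod>m\<in>M. [:- g m, 1:]))
           = card {m\<in>M. P (g m)}"
proof -
  let ?S = "{m\<in>M. P (g m)}"
  have roots: "{r. poly (\<Prod>m\<in>M. [:- g m, 1:]) r = 0 \<and> P r} = g ` ?S"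
    using assms by (auto simp: poly_prod prod_zero_iff)
  have "card ?S = (\<Sum>m\<in>?S. 1)"
    by simp
  also have "\<dots> = (\<Sum>r\<in>g ` ?S. \<Sum>m\<in>{m\<in>?S. g m = r}. 1)"
    using assms by (intro sum.image_gen) simp
  also have "\<dots> = (\<Sum>r\<in>g ` ?S. order r (\<Prod>m\<in>M. [:- g m, 1:]))"
  proof (intro sum.cong refl)
    fix r assume "r \<in> g ` ?S"
    then have "{m\<in>?S. g m = r} = {m\<in>M. g m = r}"
      by auto
    then show "(\<Sum>m\<in>{m\<in>?S. g m = r}. 1) = order r (\<Prod>m\<in>M. [:- g m, 1:])"
      using assms by (simp add: order_prod_linear)
  qed
  finally show ?thesis
    unfolding roots by simp
qed

lemma inertia_cycle_dist_sq_matrix: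
  assumes "n \<ge> 3"
  shows "i_plus (cycle_dist_sq_matrix n) = card {m. m < n \<and> 0 < cycle_sq_eigenvalue n m}"
    and "i_minus (cycle_dist_sq_matrix n) = card {m. m < n \<and> cycle_sq_eigenvalue n m < 0}"
  unfolding i_plus_def i_minus_def char_poly_cycle_dist_sq_matrix[OF assms]
  by (simp_all add: sum_order_roots_prod_linear)

lemma cycle_sq_eigenvalue_0_pos:
  assumes "n \<ge> 2"
  shows "0 < cycle_sq_eigenvalue n 0"
proof -
  have "cycle_sq_dist n 1 \<le> (\<Sum>k<n. cycle_sq_dist n k)"
    using assms by (intro member_le_sum) (auto simp: cycle_sq_dist_def)
  moreover have "cycle_sq_dist n 1 = 1"
    using assms by (simp add: cycle_sq_dist_def)
  ultimately show ?thesis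
    by (simp add: cycle_sq_eigenvalue_def)
qed

lemma cycle_sq_eigenvalue_sign:
  assumes "0 < m" "m < n"
  shows "0 < cycle_sq_eigenvalue n m \<longleftrightarrow> 0 < cos (real (n div 2) * (2 * pi * real m / real n))"
    and "cycle_sq_eigenvalue n m < 0 \<longleftrightarrow> cos (real (n div 2) * (2 * pi * real m / real n)) < 0"
  using cos_2pi_div_lt_1[OF assms] assms
  by (auto simp: cycle_sq_eigenvalue_def zero_less_divide_iff divide_less_0_iff zero_less_mult_iff
      mult_less_0_iff)

lemma cos_pi_frac_pos:
  assumes "2 * m < n"
  shows "0 < cos (pi * real m / real n)"
proof (rule cos_gt_zero_pi)
  have "real m / real n < 1 / 2"
    using assms by (simp add: field_simps)
  then show "pi * real m / real n < pi / 2"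
    using mult_strict_left_mono[OF _ pi_gt_zero] by fastforce
  show "- (pi / 2) < pi * real m / real n"
    by (rule less_le_trans[of _ 0]) auto
qed

lemma cos_pi_frac_neg:
  assumes "n < 2 * m" "m < n"
  shows "cos (pi * real m / real n) < 0"
proof -
  have "0 < cos (pi * real (n - m) / real n)"
    using assms by (intro cos_pi_frac_pos) simp
  moreover have "pi * real (n - m) / real n = pi - pi * real m / real n"
    using assms by (simp add: of_nat_diff field_simps)
  ultimately show ?thesis
    by (simp add: cos_pi_minus)
qed

lemma cycle_sq_eigenvalue_even_sign:
  assumes "n = 2 * p" "p > 0" "m < n"
  shows "0 < cycle_sq_eigenvalue n m \<longleftrightarrow> even m"
    and "cycle_sq_eigenvalue n m < 0 \<longleftrightarrow> odd m"
proof -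
  have "real (n div 2) * (2 * pi * real m / real n) = real m * pi"
    using assms by (simp add: field_simps)
  then have "cos (real (n div 2) * (2 * pi * real m / real n)) = (-1) ^ m"
    by (simp add: cos_npi)
  then show "0 < cycle_sq_eigenvalue n m \<longleftrightarrow> even m" "cycle_sq_eigenvalue n m < 0 \<longleftrightarrow> odd m"
    using cycle_sq_eigenvalue_sign[of m n] cycle_sq_eigenvalue_0_pos[of n] assms
    by (cases "m = 0"; auto)+
qed

lemma cycle_sq_eigenvalue_odd_sign:
  assumes "n = 2 * p + 1" "p > 0" "m < n"
  shows "0 < cycle_sq_eigenvalue n m \<longleftrightarrow> m = 0 \<or> (even m \<longleftrightarrow> 2 * m < n)"
    and "cycle_sq_eigenvalue n m \<noteq> 0"
proof -
  have "cycle_sq_eigenvalue n m \<noteq> 0 \<and> (0 < cycle_sq_eigenvalue n m \<longleftrightarrow> (even m \<longleftrightarrow> 2 * m < n))"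
    if "m > 0"
  proof -
    have "real (n div 2) * (2 * pi * real m / real n) = real m * pi - pi * real m / real n"
      using assms by (simp add: field_simps)
    then have "cos (real (n div 2) * (2 * pi * real m / real n)) = (-1) ^ m * cos (pi * real m / real n)"
      by (simp add: cos_diff cos_npi sin_npi)
    moreover have "2 * m < n \<or> n < 2 * m"
      using assms by presburger
    ultimately show ?thesis
      using cycle_sq_eigenvalue_sign[OF that \<open>m < n\<close>] cos_pi_frac_pos[of m n]
        cos_pi_frac_neg[of n m] \<open>m < n\<close>
      by (auto simp: zero_less_mult_iff mult_less_0_iff)
  qed
  then show "0 < cycle_sq_eigenvalue n m \<longleftrightarrow> m = 0 \<or> (even m \<longleftrightarrow> 2 * m < n)"
    and "cycle_sq_eigenvalue n m \<noteq> 0"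
    using cycle_sq_eigenvalue_0_pos[of n] assms by (cases "m = 0"; auto)+
qed

lemma card_even_atLeastAtMost: "card {m\<in>{1..p}. even m} = p div 2"
proof -
  have "{m\<in>{1..p}. even m} = (\<lambda>k. 2 * k) ` {1..p div 2}"
  proof (intro equalityI subsetI)
    fix m assume "m \<in> {m\<in>{1..p}. even m}"
    then have "m div 2 \<in> {1..p div 2}" "m = 2 * (m div 2)"
      by auto
    then show "m \<in> (\<lambda>k. 2 * k) ` {1..p div 2}"
      by blast
  next
    fix m assume "m \<in> (\<lambda>k. 2 * k) ` {1..p div 2}"
    then obtain k where "m = 2 * k" "1 \<le> k" "k \<le> p div 2"
      by auto
    then show "m \<in> {m\<in>{1..p}. even m}"
      by simp
  qed
  then show ?thesis
    by (simp add: card_image inj_on_def)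
qed

lemma card_parity_matches_lower_half:
  assumes "n = 2 * p + 1"
  shows "card {m. m < n \<and> (m = 0 \<or> (even m \<longleftrightarrow> 2 * m < n))} = 1 + 2 * (p div 2)"
proof -
  define A where "A = {m\<in>{1..p}. even m}"
  have "{m. m < n \<and> (m = 0 \<or> (even m \<longleftrightarrow> 2 * m < n))} = insert 0 (A \<union> (\<lambda>m. n - m) ` A)"
  proof (intro equalityI subsetI)
    fix m assume "m \<in> {m. m < n \<and> (m = 0 \<or> (even m \<longleftrightarrow> 2 * m < n))}"
    then have m: "m < n" "m = 0 \<or> (even m \<longleftrightarrow> 2 * m < n)"
      by auto
    have "2 * m \<noteq> n"
      using assms by presburger
    then consider "m = 0" | "m \<noteq> 0" "2 * m < n" | "m \<noteq> 0" "n < 2 * m"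
      by linarith
    then show "m \<in> insert 0 (A \<union> (\<lambda>m. n - m) ` A)"
    proof cases
      case 2
      then show ?thesis
        using m assms by (simp add: A_def)
    next
      case 3
      then have "n - m \<in> A"
        using m assms unfolding A_def by simp presburger
      moreover have "m = n - (n - m)"
        using m by simp
      ultimately show ?thesis
        by blast
    qed simp
  next
    fix m assume "m \<in> insert 0 (A \<union> (\<lambda>m. n - m) ` A)"
    then consider "m = 0" | "m \<in> A" | a where "a \<in> A" "m = n - a"
      by blast
    then show "m \<in> {m. m < n \<and> (m = 0 \<or> (even m \<longleftrightarrow> 2 * m < n))}"
    proof cases
      case 2
      then show ?thesis
        using assms by (simp add: A_def)
    next
      case 3
      then show ?thesis
        using assms unfolding A_def by simp presburger
    qed (simp add: assms)
  qed
  moreover have "card ((\<lambda>m. n - m) ` A) = card A"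
    using assms by (intro card_image) (auto simp: A_def inj_on_def)
  moreover have "A \<inter> (\<lambda>m. n - m) ` A = {}" "0 \<notin> A \<union> (\<lambda>m. n - m) ` A"
    using assms by (auto simp: A_def)
  moreover have "card A = p div 2"
    unfolding A_def by (rule card_even_atLeastAtMost)
  moreover have "finite A"
    by (simp add: A_def)
  ultimately show ?thesis
    by (simp add: card_Un_disjoint)
qed

lemma card_even_below: "card {m. m < 2 * p \<and> even m} = p"
proof -
  have "{m. m < 2 * p \<and> even m} = (\<lambda>k. 2 * k) ` {..<p}"
    by (auto elim!: evenE)
  then show ?thesis
    by (simp add: card_image inj_on_def)
qed

lemma card_odd_below: "card {m. m < 2 * p \<and> odd m} = p"
proof -
  have "{m. m < 2 * p \<and> odd m} = (\<lambda>k. 2 * k + 1) ` {..<p}"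
    by (auto elim!: oddE)
  then show ?thesis
    by (simp add: card_image inj_on_def)
qed

lemma inertia_cycle_dist_sq_matrix_even:
  assumes "n = 2 * p" "p \<ge> 2"
  shows "i_plus (cycle_dist_sq_matrix n) = p" "i_minus (cycle_dist_sq_matrix n) = p"
proof -
  have "{m. m < n \<and> 0 < cycle_sq_eigenvalue n m} = {m. m < 2 * p \<and> even m}"
    "{m. m < n \<and> cycle_sq_eigenvalue n m < 0} = {m. m < 2 * p \<and> odd m}"
    using cycle_sq_eigenvalue_even_sign[OF assms(1)] assms by auto
  then show "i_plus (cycle_dist_sq_matrix n) = p" "i_minus (cycle_dist_sq_matrix n) = p"
    using inertia_cycle_dist_sq_matrix[of n] assms by (simp_all add: card_even_below card_odd_below)
qed

lemma inertia_cycle_dist_sq_matrix_odd: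
  assumes "n = 2 * p + 1" "p \<ge> 1"
  shows "i_plus (cycle_dist_sq_matrix n) = 1 + 2 * (p div 2)"
    and "i_minus (cycle_dist_sq_matrix n) = 2 * p - 2 * (p div 2)"
proof -
  have pos: "{m. m < n \<and> 0 < cycle_sq_eigenvalue n m} = {m. m < n \<and> (m = 0 \<or> (even m \<longleftrightarrow> 2 * m < n))}"
    using cycle_sq_eigenvalue_odd_sign(1)[OF assms(1)] assms by auto
  have "{m. m < n \<and> cycle_sq_eigenvalue n m < 0} = {..<n} - {m. m < n \<and> 0 < cycle_sq_eigenvalue n m}"
    using cycle_sq_eigenvalue_odd_sign(2)[OF assms(1)] assms by force
  also have "card \<dots> = n - card {m. m < n \<and> 0 < cycle_sq_eigenvalue n m}"
    by (subst card_Diff_subset) auto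
  finally have "card {m. m < n \<and> cycle_sq_eigenvalue n m < 0} = n - (1 + 2 * (p div 2))"
    by (simp only: pos card_parity_matches_lower_half[OF assms(1)])
  then show "i_plus (cycle_dist_sq_matrix n) = 1 + 2 * (p div 2)"
    and "i_minus (cycle_dist_sq_matrix n) = 2 * p - 2 * (p div 2)"
    using inertia_cycle_dist_sq_matrix[of n] assms pos card_parity_matches_lower_half[OF assms(1)]
    by simp_all
qed

theorem corollary5p3:
  fixes n :: nat
  assumes "n \<ge> 3"
  shows "(n mod 4 = 1 \<longrightarrow>
            i_plus (cycle_dist_sq_matrix n) = (n - 1) div 2 + 1 \<and>
            i_minus (cycle_dist_sq_matrix n) = (n - 1) div 2)
       \<and> (n mod 4 = 3 \<longrightarrow>
            i_plus (cycle_dist_sq_matrix n) = (n - 1) div 2 \<and>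
            i_minus (cycle_dist_sq_matrix n) = (n - 1) div 2 + 1)
       \<and> (even n \<longrightarrow>
            i_plus (cycle_dist_sq_matrix n) = n div 2 \<and>
            i_minus (cycle_dist_sq_matrix n) = n div 2)"
proof (cases "even n")
  case True
  then obtain p where n: "n = 2 * p" ..
  with assms have "p \<ge> 2" "n mod 4 \<noteq> 1" "n mod 4 \<noteq> 3"
    by presburger+
  then show ?thesis
    using inertia_cycle_dist_sq_matrix_even[OF n] n by simp
next
  case False
  then obtain p where n: "n = 2 * p + 1"
    using oddE by blast
  with assms have "p \<ge> 1" "n mod 4 = 1 \<longleftrightarrow> even p" "n mod 4 = 3 \<longleftrightarrow> odd p"
    by presburger+
  moreover have "even p \<Longrightarrow> 2 * (p div 2) = p" "odd p \<Longrightarrow> 2 * (p div 2) = p - 1"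
    by presburger+
  ultimately show ?thesis
    using inertia_cycle_dist_sq_matrix_odd[OF n] n False by auto
qed

end
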